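(* Let $t$ and $u$ be $\lambda$-terms (terms without explicit substitutions). Then $t \equiv_{S} u$ if and only if $t \equiv_{V} u$, where $\equiv_S$ is the contextual equivalence induced by weak reduction $\to_{w}$ of the silly substitution calculus and $\equiv_V$ is the contextual equivalence induced by call-by-value reduction $\to_{\beta_v}$.
   Context: Silly substitution calculus (SSC). Terms: $t,u,s ::= x \mid \lambda x.t \mid t\,u \mid t[x\backslash u]$, where $t[x\backslash u]$ is an explicit substitution (ES) binding $x$ in $t$; $\lambda x.t$ also binds $x$ in $t$; terms are taken up to $\alpha$-renaming; $\mathrm{fv}(t[x\backslash u]) = (\mathrm{fv}(t)\setminus\{x\})\cup \mathrm{fv}(u)$. Values are abstractions only: $v ::= \lambda x.t$. Substitution contexts: $S ::= \langle\cdot\rangle \mid S[x\backslash u]$. Weak contexts: $W ::= \langle\cdot\rangle \mid W\,t \mid t\,W \mid t[x\backslash W] \mid W[x\backslash u]$ (the hole is never under an abstraction). $W\langle t\rangle$ denotes plugging (which may capture variables); $W\langle\langle t\rangle\rangle$ means plugging where $W$ does not capture the free variables of $t$. Root rules: (multiplicative) $S\langle \lambda x.t\rangle u \mapsto_m S\langle t[x\backslash u]\rangle$; (exponential) $W\langle\langle x\rangle\rangle[x\backslash u] \mapsto_{e} W\langle\langle u\rangle\rangle[x\backslash u]$ for $W$ a weak context; (GC by value) $t[x\backslash S\langle v\rangle] \mapsto_{gcv} S\langle t\rangle$ if $x\notin\mathrm{fv}(t)$, $v$ a value. $\to_{wm}$, $\to_{we}$, $\to_{wgcv}$ are the closures of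 these root rules under weak contexts, and $\to_w := \to_{wm}\cup\to_{we}\cup\to_{wgcv}$. Call-by-value $\lambda$-calculus: $\lambda$-terms $t ::= x\mid \lambda x.t\mid tu$, values are abstractions, CbV contexts $V ::= \langle\cdot\rangle \mid t V \mid V t$, root rule $(\lambda x.t)v \mapsto_{\beta_v} t\{x:=v\}$ (meta-level capture-avoiding substitution) for $v$ a value, and $\to_{\beta_v}$ its closure under CbV contexts. Contextual equivalence: for a rewriting relation $\to$ on a language of terms, with contexts being terms of that language with exactly one hole (placed anywhere, including under abstractions), $t\equiv u$ iff for every context $C$ such that $C\langle t\rangle$ and $C\langle u\rangle$ are closed, $C\langle t\rangle$ is weakly $\to$-normalizing (reduces to a $\to$-normal form) iff $C\langle u\rangle$ is. $\equiv_S$ is this for $\to_w$ on SSC terms and contexts, $\equiv_V$ for $\to_{\beta_v}$ on $\lambda$-terms and $\lambda$-contexts. *)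

theory Defs
  imports Main
begin

text \<open>Terms of the SSC, with de Bruijn indices (so terms are identified up to
alpha-renaming).  ES t u is the explicit substitution t[x\u]: it binds index 0
in t, and u is not under the binder.\<close>

datatype trm = Var nat | Lam trm | App trm trm | ES trm trm

fun shift :: "nat \<Rightarrow> nat \<Rightarrow> trm \<Rightarrow> trm" where
  "shift d c (Var i) = (if i < c then Var i else Var (i + d))"
| "shift d c (Lam t) = Lam (shift d (Suc c) t)"
| "shift d c (App t u) = App (shift d c t) (shift d c u)"
| "shift d c (ES t u) = ES (shift d (Suc c) t) (shift d c u)"

text \<open>Remove the (unused) variable with index c, decrementing the larger ones.\<close>
fun down :: "nat \<Rightarrow> trm \<Rightarrow> trm" where
  "down c (Var i) = (if i < c then Var i else Var (i - 1))"
| "down c (Lam t) = Lam (down (Suc c) t)"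
| "down c (App t u) = App (down c t) (down c u)"
| "down c (ES t u) = ES (down (Suc c) t) (down c u)"

fun fvs :: "trm \<Rightarrow> nat set" where
  "fvs (Var i) = {i}"
| "fvs (Lam t) = (\<lambda>i. i - 1) ` (fvs t - {0})"
| "fvs (App t u) = fvs t \<union> fvs u"
| "fvs (ES t u) = (\<lambda>i. i - 1) ` (fvs t - {0}) \<union> fvs u"

definition closed :: "trm \<Rightarrow> bool" where
  "closed t \<longleftrightarrow> fvs t = {}"

text \<open>Substitution contexts S = <.>[x1\u1]...[xk\uk], represented by the list
[u1,...,uk]; the hole is under k binders.\<close>
fun plugS :: "trm list \<Rightarrow> trm \<Rightarrow> trm" where
  "plugS [] t = t"
| "plugS (u # us) t = plugS us (ES t u)"

datatype wctx = WHole | WAppL wctx trm | WAppR trm wctx | WESArg trm wctx | WESBody wctx trm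

fun plugW :: "wctx \<Rightarrow> trm \<Rightarrow> trm" where
  "plugW WHole t = t"
| "plugW (WAppL W u) t = App (plugW W t) u"
| "plugW (WAppR u W) t = App u (plugW W t)"
| "plugW (WESArg u W) t = ES u (plugW W t)"
| "plugW (WESBody W u) t = ES (plugW W t) u"

fun depthW :: "wctx \<Rightarrow> nat" where
  "depthW WHole = 0"
| "depthW (WAppL W u) = depthW W"
| "depthW (WAppR u W) = depthW W"
| "depthW (WESArg u W) = depthW W"
| "depthW (WESBody W u) = Suc (depthW W)"

inductive root_m :: "trm \<Rightarrow> trm \<Rightarrow> bool" where
  "root_m (App (plugS S (Lam t)) u) (plugS S (ES t (shift (length S) 0 u)))"

text \<open>W<<x>>[x\u] -> W<<u>>[x\u]: the occurrence of x in the hole refers to the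
outer ES binder (index depthW W), and u is shifted under the binders.\<close>
inductive root_e :: "trm \<Rightarrow> trm \<Rightarrow> bool" where
  "root_e (ES (plugW W (Var (depthW W))) u)
          (ES (plugW W (shift (Suc (depthW W)) 0 u)) u)"

inductive root_gcv :: "trm \<Rightarrow> trm \<Rightarrow> bool" where
  "0 \<notin> fvs t \<Longrightarrow>
   root_gcv (ES t (plugS S (Lam v))) (plugS S (shift (length S) 0 (down 0 t)))"

inductive wstep :: "trm \<Rightarrow> trm \<Rightarrow> bool" where
  m: "root_m t t' \<Longrightarrow> wstep t t'"
| e: "root_e t t' \<Longrightarrow> wstep t t'"
| gcv: "root_gcv t t' \<Longrightarrow> wstep t t'"
| appL: "wstep t t' \<Longrightarrow> wstep (App t u) (App t' u)"
| appR: "wstep t t' \<Longrightarrow> wstep (App u t) (App u t')"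
| esBody: "wstep t t' \<Longrightarrow> wstep (ES t u) (ES t' u)"
| esArg: "wstep t t' \<Longrightarrow> wstep (ES u t) (ES u t')"

definition wnorm :: "trm \<Rightarrow> bool" where
  "wnorm t \<longleftrightarrow> (\<exists>n. wstep\<^sup>*\<^sup>* t n \<and> (\<nexists>n'. wstep n n'))"

text \<open>General SSC contexts (one hole, anywhere, plugging may capture).\<close>
datatype ctx = CHole | CLam ctx | CAppL ctx trm | CAppR trm ctx | CESBody ctx trm | CESArg trm ctx

fun plug :: "ctx \<Rightarrow> trm \<Rightarrow> trm" where
  "plug CHole t = t"
| "plug (CLam C) t = Lam (plug C t)"
| "plug (CAppL C u) t = App (plug C t) u"
| "plug (CAppR u C) t = App u (plug C t)"
| "plug (CESBody C u) t = ES (plug C t) u"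
| "plug (CESArg u C) t = ES u (plug C t)"

definition equiv_S :: "trm \<Rightarrow> trm \<Rightarrow> bool" where
  "equiv_S t u \<longleftrightarrow>
     (\<forall>C. closed (plug C t) \<and> closed (plug C u) \<longrightarrow> (wnorm (plug C t) \<longleftrightarrow> wnorm (plug C u)))"

datatype lterm = LVar nat | LLam lterm | LApp lterm lterm

fun lshift :: "nat \<Rightarrow> nat \<Rightarrow> lterm \<Rightarrow> lterm" where
  "lshift d c (LVar i) = (if i < c then LVar i else LVar (i + d))"
| "lshift d c (LLam t) = LLam (lshift d (Suc c) t)"
| "lshift d c (LApp t u) = LApp (lshift d c t) (lshift d c u)"

text \<open>lsubst t k s: capture-avoiding substitution of s for index k in t
(with the indices above k decremented), i.e. t{x:=s}.\<close>
fun lsubst :: "lterm \<Rightarrow> nat \<Rightarrow> lterm \<Rightarrow> lterm" where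
  "lsubst (LVar i) k s = (if i < k then LVar i else if i = k then lshift k 0 s else LVar (i - 1))"
| "lsubst (LLam t) k s = LLam (lsubst t (Suc k) s)"
| "lsubst (LApp t u) k s = LApp (lsubst t k s) (lsubst u k s)"

fun lfvs :: "lterm \<Rightarrow> nat set" where
  "lfvs (LVar i) = {i}"
| "lfvs (LLam t) = (\<lambda>i. i - 1) ` (lfvs t - {0})"
| "lfvs (LApp t u) = lfvs t \<union> lfvs u"

definition lclosed :: "lterm \<Rightarrow> bool" where
  "lclosed t \<longleftrightarrow> lfvs t = {}"

inductive bvstep :: "lterm \<Rightarrow> lterm \<Rightarrow> bool" where
  beta: "bvstep (LApp (LLam t) (LLam v)) (lsubst t 0 (LLam v))"
| appL: "bvstep t t' \<Longrightarrow> bvstep (LApp t u) (LApp t' u)"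
| appR: "bvstep t t' \<Longrightarrow> bvstep (LApp u t) (LApp u t')"

definition bvnorm :: "lterm \<Rightarrow> bool" where
  "bvnorm t \<longleftrightarrow> (\<exists>n. bvstep\<^sup>*\<^sup>* t n \<and> (\<nexists>n'. bvstep n n'))"

datatype lctx = LHole | LCLam lctx | LCAppL lctx lterm | LCAppR lterm lctx

fun lplug :: "lctx \<Rightarrow> lterm \<Rightarrow> lterm" where
  "lplug LHole t = t"
| "lplug (LCLam C) t = LLam (lplug C t)"
| "lplug (LCAppL C u) t = LApp (lplug C t) u"
| "lplug (LCAppR u C) t = LApp u (lplug C t)"

definition equiv_V :: "lterm \<Rightarrow> lterm \<Rightarrow> bool" where
  "equiv_V t u \<longleftrightarrow>
     (\<forall>C. lclosed (lplug C t) \<and> lclosed (lplug C u) \<longrightarrow> (bvnorm (lplug C t) \<longleftrightarrow> bvnorm (lplug C u)))"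

fun emb :: "lterm \<Rightarrow> trm" where
  "emb (LVar i) = Var i"
| "emb (LLam t) = Lam (emb t)"
| "emb (LApp t u) = App (emb t) (emb u)"

end

theory Submission
  imports Defs
begin

text \<open>Read an explicit substitution t[x\u] as the redex (\<lambda>x.t) u. This translation is the identity
on \<lambda>-terms and commutes with plugging into contexts, so it suffices that a closed SSC term is
\<rightarrow>w-normalising iff its translation is \<rightarrow>\<beta>v-normalising. Both are compared with big-step CbV
evaluation of the translation, which for closed \<lambda>-terms characterises \<rightarrow>\<beta>v-normalisation.
A weak step does not change the value of the translation under any environment of values, and a
closed \<rightarrow>w-normal form is an answer S<\<lambda>x.b>, whose translation evaluates. Conversely, induction
on an evaluation derivation shows that weak reduction reaches an answer with the same value: a
variable bound by an explicit substitution of the surrounding weak context is replaced by the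
argument of that substitution, an answer, through the e-rule; and answers \<rightarrow>w-normalise because
weak steps shrink them.\<close>

lemma image_pred_subset_lessThan_iff [simp]:
  "(\<lambda>i. i - Suc 0) ` (X - {0}) \<subseteq> {..<n} \<longleftrightarrow> X \<subseteq> {..<Suc n}"
proof
  assume "(\<lambda>i. i - Suc 0) ` (X - {0}) \<subseteq> {..<n}"
  then show "X \<subseteq> {..<Suc n}" by (force simp: subset_eq)
qed auto

section \<open>Big-step call-by-value evaluation\<close>

inductive cbv_eval :: "lterm \<Rightarrow> lterm \<Rightarrow> bool" where
  cbv_eval_LLam: "cbv_eval (LLam t) (LLam t)"
| cbv_eval_LApp: "cbv_eval p (LLam c) \<Longrightarrow> cbv_eval q w \<Longrightarrow> cbv_eval (lsubst c 0 w) v \<Longrightarrow>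
    cbv_eval (LApp p q) v"

lemma cbv_eval_LLam_iff [simp]: "cbv_eval (LLam c) v \<longleftrightarrow> v = LLam c"
  by (auto elim: cbv_eval.cases intro: cbv_eval.intros)

lemma not_cbv_eval_LVar [simp]: "\<not> cbv_eval (LVar i) v"
  by (auto elim: cbv_eval.cases)

lemma cbv_eval_LApp_iff:
  "cbv_eval (LApp p q) v \<longleftrightarrow> (\<exists>c w. cbv_eval p (LLam c) \<and> cbv_eval q w \<and> cbv_eval (lsubst c 0 w) v)"
  by (rule iffI, erule cbv_eval.cases) (auto intro: cbv_eval.intros)

lemma cbv_eval_imp_LLam: "cbv_eval t v \<Longrightarrow> \<exists>b. v = LLam b"
  by (induction rule: cbv_eval.induct) auto

lemma cbv_eval_deterministic: "cbv_eval t v \<Longrightarrow> cbv_eval t v' \<Longrightarrow> v' = v"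
proof (induction arbitrary: v' rule: cbv_eval.induct)
  case (cbv_eval_LLam t)
  then show ?case by simp
next
  case (cbv_eval_LApp p c q w v)
  from cbv_eval_LApp.prems obtain c' w'
    where "cbv_eval p (LLam c')" "cbv_eval q w'" "cbv_eval (lsubst c' 0 w') v'"
    by (auto simp: cbv_eval_LApp_iff)
  then show ?case using cbv_eval_LApp.IH by fastforce
qed

lemma bvsteps_LApp:
  assumes "bvstep\<^sup>*\<^sup>* p p'" and "bvstep\<^sup>*\<^sup>* q q'"
  shows "bvstep\<^sup>*\<^sup>* (LApp p q) (LApp p' q')"
proof -
  have "bvstep\<^sup>*\<^sup>* (LApp p q) (LApp p' q)"
    using assms(1) by induction (auto intro: bvstep.appL rtranclp.rtrancl_into_rtrancl)
  also have "bvstep\<^sup>*\<^sup>* (LApp p' q) (LApp p' q')"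
    using assms(2) by induction (auto intro: bvstep.appR rtranclp.rtrancl_into_rtrancl)
  finally show ?thesis .
qed

lemma cbv_eval_imp_bvsteps: "cbv_eval t v \<Longrightarrow> bvstep\<^sup>*\<^sup>* t v"
proof (induction rule: cbv_eval.induct)
  case (cbv_eval_LApp p c q w v)
  obtain d where "w = LLam d" using cbv_eval_imp_LLam[OF cbv_eval_LApp.hyps(2)] by blast
  then have "bvstep (LApp (LLam c) w) (lsubst c 0 w)" by (auto intro: bvstep.beta)
  then show ?case using bvsteps_LApp[OF cbv_eval_LApp.IH(1,2)] cbv_eval_LApp.IH(3)
    by (meson converse_rtranclp_into_rtranclp rtranclp_trans)
qed simp

lemma bvstep_cbv_eval_backward: "bvstep t t' \<Longrightarrow> cbv_eval t' v \<Longrightarrow> cbv_eval t v"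
proof (induction arbitrary: v rule: bvstep.induct)
  case beta
  then show ?case by (auto intro: cbv_eval.intros)
qed (auto simp: cbv_eval_LApp_iff)

lemma lshift_0 [simp]: "lshift 0 c t = t"
  by (induction t arbitrary: c) auto

lemma lfvs_lshift_bound: "lfvs t \<subseteq> {..<n} \<Longrightarrow> lfvs (lshift d c t) \<subseteq> {..<n + d}"
proof (induction t arbitrary: n c)
  case (LLam t)
  then have "lfvs (lshift d (Suc c) t) \<subseteq> {..<Suc n + d}" using LLam.IH[of "Suc n" "Suc c"] by simp
  then show ?case by simp
qed auto

lemma lfvs_lsubst_bound:
  "lfvs t \<subseteq> {..<Suc n} \<Longrightarrow> lfvs s \<subseteq> {..<n - k} \<Longrightarrow> k \<le> n \<Longrightarrow> lfvs (lsubst t k s) \<subseteq> {..<n}"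
proof (induction t arbitrary: n k)
  case (LVar i)
  then show ?case using lfvs_lshift_bound[OF LVar.prems(2), of k 0] by auto
next
  case (LLam t)
  then show ?case using LLam.IH[of "Suc n" "Suc k"] by simp
qed auto

lemma bvstep_lfvs_bound: "bvstep t t' \<Longrightarrow> lfvs t \<subseteq> {..<n} \<Longrightarrow> lfvs t' \<subseteq> {..<n}"
proof (induction arbitrary: n rule: bvstep.induct)
  case (beta t v)
  then show ?case using lfvs_lsubst_bound[of t n "LLam v" 0] by simp
qed auto

lemma lclosed_bvnormal_imp_LLam: "lclosed t \<Longrightarrow> \<nexists>t'. bvstep t t' \<Longrightarrow> \<exists>b. t = LLam b"
proof (induction t)
  case (LApp p q)
  have "\<nexists>t'. bvstep p t'" "\<nexists>t'. bvstep q t'"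
    using LApp.prems(2) bvstep.appL bvstep.appR by blast+
  then obtain b c where "p = LLam b" "q = LLam c" using LApp by (auto simp: lclosed_def)
  then show ?case using LApp.prems(2) bvstep.beta by blast
qed (auto simp: lclosed_def)

theorem bvnorm_iff_cbv_eval: "lclosed t \<Longrightarrow> bvnorm t \<longleftrightarrow> (\<exists>v. cbv_eval t v)"
proof
  assume "lclosed t" and "bvnorm t"
  then obtain n where steps: "bvstep\<^sup>*\<^sup>* t n" and normal: "\<nexists>n'. bvstep n n'"
    unfolding bvnorm_def by blast
  have "lfvs n \<subseteq> {..<0}" using steps \<open>lclosed t\<close>
    by induction (auto simp: lclosed_def dest: bvstep_lfvs_bound)
  then have "lclosed n" by (simp add: lclosed_def)
  then obtain b where "n = LLam b" using lclosed_bvnormal_imp_LLam normal by blast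
  then have "cbv_eval n n" by simp
  with steps have "cbv_eval t n"
    by (induction rule: converse_rtranclp_induct) (auto intro: bvstep_cbv_eval_backward)
  then show "\<exists>v. cbv_eval t v" by blast
next
  assume "\<exists>v. cbv_eval t v"
  then obtain v where v: "cbv_eval t v" by blast
  then obtain b where "v = LLam b" using cbv_eval_imp_LLam by blast
  then have "\<nexists>n'. bvstep v n'" by (auto elim: bvstep.cases)
  then show "bvnorm t" unfolding bvnorm_def using cbv_eval_imp_bvsteps[OF v] by blast
qed

section \<open>Explicit substitutions as \<beta>-redexes\<close>

fun lterm_of :: "trm \<Rightarrow> lterm" where
  "lterm_of (Var i) = LVar i"
| "lterm_of (Lam t) = LLam (lterm_of t)"
| "lterm_of (App t u) = LApp (lterm_of t) (lterm_of u)"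
| "lterm_of (ES t u) = LApp (LLam (lterm_of t)) (lterm_of u)"

lemma lterm_of_emb [simp]: "lterm_of (emb t) = t"
  by (induction t) auto

lemma lfvs_lterm_of [simp]: "lfvs (lterm_of t) = fvs t"
  by (induction t) auto

lemma lterm_of_shift: "lterm_of (shift d c t) = lshift d c (lterm_of t)"
  by (induction t arbitrary: c) auto

text \<open>Simultaneous substitution of s ! j for the index k + j; the indices from k + length s on
are lowered by length s, so lsubst t k s is lsubst_list [s] k t.\<close>
fun lsubst_list :: "lterm list \<Rightarrow> nat \<Rightarrow> lterm \<Rightarrow> lterm" where
  "lsubst_list s k (LVar i) =
    (if i < k then LVar i
     else if i - k < length s then lshift k 0 (s ! (i - k))
     else LVar (i - length s))"
| "lsubst_list s k (LLam t) = LLam (lsubst_list s (Suc k) t)"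
| "lsubst_list s k (LApp t u) = LApp (lsubst_list s k t) (lsubst_list s k u)"

lemma lsubst_list_Nil [simp]: "lsubst_list [] k t = t"
  by (induction t arbitrary: k) auto

lemma lsubst_lshift: "c \<le> k \<Longrightarrow> k \<le> c + n \<Longrightarrow> lsubst (lshift (Suc n) c t) k w = lshift n c t"
  by (induction t arbitrary: c k) auto

lemma lsubst_lsubst_list: "lsubst (lsubst_list s (Suc k) t) k w = lsubst_list (w # s) k t"
proof (induction t arbitrary: k)
  case (LVar i)
  consider "i \<le> k" | "k < i" "i - Suc k < length s" | "k < i" "\<not> i - Suc k < length s"
    by linarith
  then show ?case
  proof cases
    case 2
    then have "i - k = Suc (i - Suc k)" by simp
    then show ?thesis using 2 by (simp add: lsubst_lshift)
  qed auto
qed auto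

lemma lsubst_list_lshift:
  "m \<le> length s \<Longrightarrow> lsubst_list s k (lshift m k t) = lsubst_list (drop m s) k t"
  by (induction t arbitrary: k) (auto simp: add.commute)

lemma lsubst_list_lterm_of_down:
  "k \<notin> fvs t \<Longrightarrow> lsubst_list s k (lterm_of (down k t)) = lsubst_list (w # s) k (lterm_of t)"
proof (induction t arbitrary: k)
  case (Var i)
  then show ?case by (cases "i < k") (auto simp: Suc_diff_Suc)
next
  case (Lam t)
  then show ?case by force
next
  case (ES t u)
  then show ?case by force
qed auto

definition eval_env :: "lterm list \<Rightarrow> trm \<Rightarrow> lterm \<Rightarrow> bool" where
  "eval_env s t v \<longleftrightarrow> cbv_eval (lsubst_list s 0 (lterm_of t)) v"

lemma eval_env_Var: "eval_env s (Var i) v \<longleftrightarrow> i < length s \<and> cbv_eval (s ! i) v"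
  by (simp add: eval_env_def)

lemma eval_env_Lam: "eval_env s (Lam b) v \<longleftrightarrow> v = LLam (lsubst_list s (Suc 0) (lterm_of b))"
  by (simp add: eval_env_def)

lemma eval_env_App:
  "eval_env s (App p q) v \<longleftrightarrow>
    (\<exists>c w. eval_env s p (LLam c) \<and> eval_env s q w \<and> cbv_eval (lsubst c 0 w) v)"
  by (simp add: eval_env_def cbv_eval_LApp_iff)

lemma eval_env_ES: "eval_env s (ES t u) v \<longleftrightarrow> (\<exists>w. eval_env s u w \<and> eval_env (w # s) t v)"
  by (simp add: eval_env_def cbv_eval_LApp_iff lsubst_lsubst_list[where k = 0, simplified])

lemma eval_env_shift: "length ws = k \<Longrightarrow> eval_env (ws @ s) (shift k 0 u) v \<longleftrightarrow> eval_env s u v"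
  using lsubst_list_lshift[of k "ws @ s" 0 "lterm_of u"] by (simp add: eval_env_def lterm_of_shift)

lemma eval_env_down:
  "0 \<notin> fvs t \<Longrightarrow> eval_env s (down 0 t) v \<longleftrightarrow> eval_env (w # s) t v"
  using lsubst_list_lterm_of_down[of 0 t s w] by (simp add: eval_env_def)

lemma eval_env_imp_LLam: "eval_env s t v \<Longrightarrow> \<exists>b. v = LLam b"
  unfolding eval_env_def by (rule cbv_eval_imp_LLam)

lemma eval_env_deterministic: "eval_env s t v \<Longrightarrow> eval_env s t v' \<Longrightarrow> v' = v"
  unfolding eval_env_def by (rule cbv_eval_deterministic)

text \<open>The arguments of a substitution context evaluate to ws, innermost first, each under the
values of the arguments outside it.\<close>
fun eval_args :: "lterm list \<Rightarrow> trm list \<Rightarrow> lterm list \<Rightarrow> bool" where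
  "eval_args s [] ws \<longleftrightarrow> ws = []"
| "eval_args s (u # us) ws \<longleftrightarrow> (\<exists>w ws'. ws = w # ws' \<and> eval_args s us ws' \<and> eval_env (ws' @ s) u w)"

lemma eval_args_length: "eval_args s S ws \<Longrightarrow> length ws = length S"
  by (induction S arbitrary: ws) auto

lemma eval_env_plugS:
  "eval_env s (plugS S p) v \<longleftrightarrow> (\<exists>ws. eval_args s S ws \<and> eval_env (ws @ s) p v)"
proof (induction S arbitrary: p)
  case (Cons u us)
  have "eval_env s (plugS (u # us) p) v \<longleftrightarrow>
      (\<exists>ws. eval_args s us ws \<and> (\<exists>w. eval_env (ws @ s) u w \<and> eval_env (w # ws @ s) p v))"
    by (simp only: plugS.simps Cons.IH eval_env_ES)
  also have "\<dots> \<longleftrightarrow> (\<exists>ws. eval_args s (u # us) ws \<and> eval_env (ws @ s) p v)"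
    by fastforce
  finally show ?case .
qed simp

section \<open>Weak reduction preserves evaluation\<close>

lemma eval_env_plugW_backward:
  assumes "\<And>r x. length r = depthW W \<Longrightarrow> eval_env (r @ s) p' x \<Longrightarrow> eval_env (r @ s) p x"
    and "eval_env s (plugW W p') v"
  shows "eval_env s (plugW W p) v"
  using assms
proof (induction W arbitrary: s v)
  case WHole
  then show ?case using WHole(1)[of "[]"] by simp
next
  case (WESBody W u)
  from WESBody.prems(2) obtain w where w: "eval_env s u w" "eval_env (w # s) (plugW W p') v"
    by (auto simp: eval_env_ES)
  have "eval_env (w # s) (plugW W p) v"
  proof (rule WESBody.IH[OF _ w(2)])
    fix r x
    assume "length r = depthW W" and "eval_env (r @ w # s) p' x"
    then show "eval_env (r @ w # s) p x" using WESBody.prems(1)[of "r @ [w]" x] by simp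
  qed
  then show ?case using w(1) by (auto simp: eval_env_ES)
qed (auto simp: eval_env_App eval_env_ES)

lemma root_m_eval_env_backward:
  assumes "root_m t t'" and "eval_env s t' v"
  shows "eval_env s t v"
proof -
  obtain S b u where t: "t = App (plugS S (Lam b)) u"
    and t': "t' = plugS S (ES b (shift (length S) 0 u))"
    using assms(1) by (auto elim: root_m.cases)
  from assms(2) obtain ws where ws: "eval_args s S ws"
    and body: "eval_env (ws @ s) (ES b (shift (length S) 0 u)) v"
    unfolding t' eval_env_plugS by blast
  from body obtain w where w: "eval_env s u w" "eval_env (w # ws @ s) b v"
    by (auto simp: eval_env_ES eval_env_shift[OF eval_args_length[OF ws]])
  have "eval_env s (plugS S (Lam b)) (LLam (lsubst_list (ws @ s) (Suc 0) (lterm_of b)))"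
    using ws by (auto simp: eval_env_plugS eval_env_Lam)
  moreover have "cbv_eval (lsubst (lsubst_list (ws @ s) (Suc 0) (lterm_of b)) 0 w) v"
    using w(2) by (simp add: lsubst_lsubst_list eval_env_def)
  ultimately show ?thesis unfolding t eval_env_App using w(1) by blast
qed

lemma root_e_eval_env_backward:
  assumes "root_e t t'" and "eval_env s t' v"
  shows "eval_env s t v"
proof -
  obtain W u where t: "t = ES (plugW W (Var (depthW W))) u"
    and t': "t' = ES (plugW W (shift (Suc (depthW W)) 0 u)) u"
    using assms(1) by (auto elim: root_e.cases)
  from assms(2) obtain w where w: "eval_env s u w"
    and body: "eval_env (w # s) (plugW W (shift (Suc (depthW W)) 0 u)) v"
    unfolding t' eval_env_ES by blast
  have "eval_env (w # s) (plugW W (Var (depthW W))) v"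
  proof (rule eval_env_plugW_backward[OF _ body])
    fix r x
    assume r: "length r = depthW W" and "eval_env (r @ w # s) (shift (Suc (depthW W)) 0 u) x"
    then have "eval_env s u x" using eval_env_shift[of "r @ [w]" "Suc (depthW W)" s u] by simp
    then have "x = w" using w eval_env_deterministic by blast
    moreover obtain b where "w = LLam b" using eval_env_imp_LLam[OF w] by blast
    ultimately show "eval_env (r @ w # s) (Var (depthW W)) x"
      using r by (simp add: eval_env_Var nth_append)
  qed
  then show ?thesis unfolding t eval_env_ES using w by blast
qed

lemma root_gcv_eval_env_backward:
  assumes "root_gcv t t'" and "eval_env s t' v"
  shows "eval_env s t v"
proof -
  obtain S b c where t: "t = ES b (plugS S (Lam c))"
    and t': "t' = plugS S (shift (length S) 0 (down 0 b))" and unused: "0 \<notin> fvs b"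
    using assms(1) by (auto elim: root_gcv.cases)
  from assms(2) obtain ws where ws: "eval_args s S ws"
    and body: "eval_env (ws @ s) (shift (length S) 0 (down 0 b)) v"
    unfolding t' eval_env_plugS by blast
  let ?w = "LLam (lsubst_list (ws @ s) (Suc 0) (lterm_of c))"
  have "eval_env s (plugS S (Lam c)) ?w"
    using ws by (auto simp: eval_env_plugS eval_env_Lam)
  moreover have "eval_env (?w # s) b v"
    using body eval_env_shift[OF eval_args_length[OF ws]] eval_env_down[OF unused] by simp
  ultimately show ?thesis unfolding t eval_env_ES by blast
qed

lemma wstep_eval_env_backward: "wstep t t' \<Longrightarrow> eval_env s t' v \<Longrightarrow> eval_env s t v"
proof (induction arbitrary: s v rule: wstep.induct)
  case m
  then show ?case by (rule root_m_eval_env_backward)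
next
  case e
  then show ?case by (rule root_e_eval_env_backward)
next
  case gcv
  then show ?case by (rule root_gcv_eval_env_backward)
qed (auto simp: eval_env_App eval_env_ES)

lemma wsteps_eval_env_backward: "wstep\<^sup>*\<^sup>* t t' \<Longrightarrow> eval_env s t' v \<Longrightarrow> eval_env s t v"
  by (induction rule: converse_rtranclp_induct) (auto intro: wstep_eval_env_backward)

section \<open>Closed normal forms evaluate\<close>

inductive answer :: "trm \<Rightarrow> bool" where
  answer_Lam: "answer (Lam b)"
| answer_ES: "answer t \<Longrightarrow> answer a \<Longrightarrow> answer (ES t a)"

lemma answer_ES_iff [simp]: "answer (ES t a) \<longleftrightarrow> answer t \<and> answer a"
  by (auto elim: answer.cases intro: answer.intros)

lemma not_answer_App [simp]: "\<not> answer (App t a)"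
  by (auto elim: answer.cases)

lemma not_answer_Var [simp]: "\<not> answer (Var i)"
  by (auto elim: answer.cases)

lemma plugS_append: "plugS (S @ [u]) t = ES (plugS S t) u"
  by (induction S arbitrary: t) auto

lemma answer_plugS_iff: "answer (plugS S t) \<longleftrightarrow> answer t \<and> (\<forall>u\<in>set S. answer u)"
  by (induction S arbitrary: t) auto

lemma answer_imp_plugS_Lam: "answer a \<Longrightarrow> \<exists>S b. a = plugS S (Lam b) \<and> (\<forall>u\<in>set S. answer u)"
proof (induction rule: answer.induct)
  case (answer_Lam b)
  show ?case by (intro exI[of _ "[]"]) auto
next
  case (answer_ES t a)
  then obtain S b where "t = plugS S (Lam b)" "\<forall>u\<in>set S. answer u" by blast
  then show ?case using answer_ES by (intro exI[of _ "S @ [a]"]) (auto simp: plugS_append)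
qed

lemma answer_eval_env: "answer a \<Longrightarrow> \<exists>v. eval_env s a v"
proof (induction arbitrary: s rule: answer.induct)
  case (answer_ES t a)
  then obtain w v where "eval_env s a w" "eval_env (w # s) t v" by blast
  then show ?case by (auto simp: eval_env_ES)
qed (auto simp: eval_env_Lam)

text \<open>The variables occurring free outside every abstraction, i.e. in the hole of a weak context.\<close>
fun wfvs :: "trm \<Rightarrow> nat set" where
  "wfvs (Var i) = {i}"
| "wfvs (Lam t) = {}"
| "wfvs (App t u) = wfvs t \<union> wfvs u"
| "wfvs (ES t u) = (\<lambda>i. i - 1) ` (wfvs t - {0}) \<union> wfvs u"

lemma wfvs_subset_fvs: "wfvs t \<subseteq> fvs t"
  by (induction t) auto

lemma wfvs_imp_plugW_Var: "i \<in> wfvs t \<Longrightarrow> \<exists>W. t = plugW W (Var (i + depthW W))"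
proof (induction t arbitrary: i)
  case (Var j)
  then show ?case by (intro exI[of _ WHole]) simp
next
  case (App t u)
  show ?case
  proof (cases "i \<in> wfvs t")
    case True
    then obtain W where "t = plugW W (Var (i + depthW W))" using App.IH(1) by blast
    then show ?thesis by (intro exI[of _ "WAppL W u"]) simp
  next
    case False
    then obtain W where "u = plugW W (Var (i + depthW W))" using App by auto
    then show ?thesis by (intro exI[of _ "WAppR t W"]) simp
  qed
next
  case (ES t u)
  show ?case
  proof (cases "i \<in> wfvs u")
    case True
    then obtain W where "u = plugW W (Var (i + depthW W))" using ES.IH(2) by blast
    then show ?thesis by (intro exI[of _ "WESArg t W"]) simp
  next
    case False
    then obtain j where "j \<in> wfvs t" "j \<noteq> 0" "i = j - 1" using ES.prems by auto
    then have "Suc i \<in> wfvs t" by simp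
    then obtain W where "t = plugW W (Var (Suc i + depthW W))" using ES.IH(1) by blast
    then show ?thesis by (intro exI[of _ "WESBody W u"]) simp
  qed
qed simp

abbreviation wnormal :: "trm \<Rightarrow> bool" where
  "wnormal t \<equiv> \<nexists>t'. wstep t t'"

lemma wnormal_wfvs_empty_imp_answer: "wnormal t \<Longrightarrow> wfvs t = {} \<Longrightarrow> answer t"
proof (induction t)
  case (App p q)
  then have "answer p" using wstep.appL by fastforce
  then obtain S b where "p = plugS S (Lam b)" using answer_imp_plugS_Lam by blast
  then have "wstep (App p q) (plugS S (ES b (shift (length S) 0 q)))"
    by (auto intro: wstep.m root_m.intros)
  then show ?case using App.prems(1) by blast
next
  case (ES p q)
  have "0 \<notin> wfvs p"
  proof
    assume "0 \<in> wfvs p"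
    then obtain W where "p = plugW W (Var (depthW W))" using wfvs_imp_plugW_Var by fastforce
    then have "wstep (ES p q) (ES (plugW W (shift (Suc (depthW W)) 0 q)) q)"
      by (auto intro: wstep.e root_e.intros)
    then show False using ES.prems(1) by blast
  qed
  then have "wfvs p = {}" "wfvs q = {}" using ES.prems(2) by auto
  then show ?case using ES wstep.esBody wstep.esArg by (meson answer_ES)
qed (auto intro: answer.intros)

lemma fvs_shift_bound: "fvs t \<subseteq> {..<n} \<Longrightarrow> fvs (shift d c t) \<subseteq> {..<n + d}"
proof (induction t arbitrary: n c)
  case (Lam t)
  then show ?case using Lam.IH[of "Suc n" "Suc c"] by simp
next
  case (ES t u)
  then show ?case using ES.IH(1)[of "Suc n" "Suc c"] by simp
qed auto

lemma fvs_down_bound: "c \<notin> fvs t \<Longrightarrow> fvs t \<subseteq> {..<Suc n} \<Longrightarrow> c \<le> n \<Longrightarrow> fvs (down c t) \<subseteq> {..<n}"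
proof (induction t arbitrary: n c)
  case (Lam t)
  have "Suc c \<notin> fvs t" using Lam.prems(1) by force
  then show ?case using Lam by simp
next
  case (ES t u)
  have "Suc c \<notin> fvs t" using ES.prems(1) by force
  then show ?case using ES by simp
qed auto

fun args_fvs_bounded :: "nat \<Rightarrow> trm list \<Rightarrow> bool" where
  "args_fvs_bounded n [] \<longleftrightarrow> True"
| "args_fvs_bounded n (u # us) \<longleftrightarrow> args_fvs_bounded n us \<and> fvs u \<subseteq> {..<n + length us}"

lemma fvs_plugS_bound_iff:
  "fvs (plugS S t) \<subseteq> {..<n} \<longleftrightarrow> args_fvs_bounded n S \<and> fvs t \<subseteq> {..<n + length S}"
  by (induction S arbitrary: t) (auto simp: ac_simps)

lemma fvs_plugW_bound:
  "(fvs t \<subseteq> {..<n + depthW W} \<Longrightarrow> fvs t' \<subseteq> {..<n + depthW W}) \<Longrightarrow>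
    fvs (plugW W t) \<subseteq> {..<n} \<Longrightarrow> fvs (plugW W t') \<subseteq> {..<n}"
proof (induction W arbitrary: n)
  case (WESBody W u)
  then show ?case using WESBody.IH[of "Suc n"] by simp
qed auto

lemma wstep_fvs_bound: "wstep t t' \<Longrightarrow> fvs t \<subseteq> {..<n} \<Longrightarrow> fvs t' \<subseteq> {..<n}"
proof (induction arbitrary: n rule: wstep.induct)
  case (m t t')
  then obtain S b u where t: "t = App (plugS S (Lam b)) u"
    and t': "t' = plugS S (ES b (shift (length S) 0 u))"
    by (auto elim: root_m.cases)
  show ?case
    using m.prems fvs_shift_bound[of u n "length S" 0] unfolding t t'
    by (auto simp: fvs_plugS_bound_iff)
next
  case (e t t')
  then obtain W u where t: "t = ES (plugW W (Var (depthW W))) u"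
    and t': "t' = ES (plugW W (shift (Suc (depthW W)) 0 u)) u"
    by (auto elim: root_e.cases)
  have u: "fvs u \<subseteq> {..<n}" using e.prems t by simp
  have "fvs (plugW W (shift (Suc (depthW W)) 0 u)) \<subseteq> {..<Suc n}"
    by (rule fvs_plugW_bound[of "Var (depthW W)"])
      (use e.prems t fvs_shift_bound[OF u, of "Suc (depthW W)" 0] in auto)
  then show ?case using u t' by simp
next
  case (gcv t t')
  then obtain S b c where t: "t = ES b (plugS S (Lam c))"
    and t': "t' = plugS S (shift (length S) 0 (down 0 b))" and unused: "0 \<notin> fvs b"
    by (auto elim: root_gcv.cases)
  have "fvs (down 0 b) \<subseteq> {..<n}" using fvs_down_bound[OF unused, of n] gcv.prems t by simp
  then show ?case
    using gcv.prems fvs_shift_bound[of "down 0 b" n "length S" 0] unfolding t t'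
    by (auto simp: fvs_plugS_bound_iff)
qed auto

lemma wsteps_closed: "wstep\<^sup>*\<^sup>* t t' \<Longrightarrow> closed t \<Longrightarrow> closed t'"
proof -
  assume "wstep\<^sup>*\<^sup>* t t'" and "closed t"
  then have "fvs t' \<subseteq> {..<0}"
    by (induction rule: rtranclp_induct) (auto simp: closed_def dest: wstep_fvs_bound)
  then show "closed t'" by (simp add: closed_def)
qed

lemma closed_wnorm_imp_cbv_eval: "closed s \<Longrightarrow> wnorm s \<Longrightarrow> \<exists>v. cbv_eval (lterm_of s) v"
proof -
  assume "closed s" and "wnorm s"
  then obtain n where steps: "wstep\<^sup>*\<^sup>* s n" and "wnormal n" unfolding wnorm_def by blast
  have "closed n" using wsteps_closed[OF steps \<open>closed s\<close>] .
  then have "wfvs n = {}" using wfvs_subset_fvs[of n] by (auto simp: closed_def)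
  then obtain v where "eval_env [] n v"
    using answer_eval_env wnormal_wfvs_empty_imp_answer[OF \<open>wnormal n\<close>] by blast
  then have "eval_env [] s v" using wsteps_eval_env_backward[OF steps] by blast
  then show ?thesis by (auto simp: eval_env_def)
qed

section \<open>Evaluation is simulated by weak reduction\<close>

lemma answer_shift: "answer t \<Longrightarrow> answer (shift d c t)"
  by (induction arbitrary: c rule: answer.induct) (auto intro: answer.intros)

lemma answer_down: "answer t \<Longrightarrow> answer (down c t)"
  by (induction arbitrary: c rule: answer.induct) (auto intro: answer.intros)

lemma not_answer_plugW_Var: "\<not> answer (plugW W (Var i))"
  by (induction W) auto

lemma size_shift [simp]: "size (shift d c t) = size t"
  by (induction t arbitrary: c) auto

lemma size_down [simp]: "size (down c t) = size t"
  by (induction t arbitrary: c) auto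

lemma size_plugS: "size (plugS S t) + size t' = size (plugS S t') + size t"
  by (induction S arbitrary: t t') auto

lemma answer_wstep: "wstep t t' \<Longrightarrow> answer t \<Longrightarrow> answer t' \<and> size t' < size t"
proof (induction rule: wstep.induct)
  case (m t t')
  then show ?case by (auto elim: root_m.cases)
next
  case (e t t')
  then show ?case by (auto elim: root_e.cases simp: not_answer_plugW_Var)
next
  case (gcv t t')
  then obtain S b c where t: "t = ES b (plugS S (Lam c))"
    and t': "t' = plugS S (shift (length S) 0 (down 0 b))"
    by (auto elim: root_gcv.cases)
  have "answer t'"
    using gcv.prems unfolding t t' by (auto simp: answer_plugS_iff intro: answer_shift answer_down)
  moreover have "size t' < size t"
    using size_plugS[of S "Lam c" "shift (length S) 0 (down 0 b)"] unfolding t t' by simp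
  ultimately show ?case by blast
qed auto

lemma answer_wnorm: "answer a \<Longrightarrow> wnorm a"
proof (induction "size a" arbitrary: a rule: less_induct)
  case less
  show ?case
  proof (cases "wnormal a")
    case True
    then show ?thesis unfolding wnorm_def by blast
  next
    case False
    then obtain a' where step: "wstep a a'" by blast
    then have "wnorm a'" using answer_wstep[OF step less.prems] less.hyps by blast
    then show ?thesis using step unfolding wnorm_def by (meson converse_rtranclp_into_rtranclp)
  qed
qed

lemma wstep_plugW: "wstep t t' \<Longrightarrow> wstep (plugW W t) (plugW W t')"
  by (induction W) (auto intro: wstep.intros)

fun compW :: "wctx \<Rightarrow> wctx \<Rightarrow> wctx" where
  "compW WHole W' = W'"
| "compW (WAppL W u) W' = WAppL (compW W W') u"
| "compW (WAppR u W) W' = WAppR u (compW W W')"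
| "compW (WESArg u W) W' = WESArg u (compW W W')"
| "compW (WESBody W u) W' = WESBody (compW W W') u"

lemma plugW_compW [simp]: "plugW (compW W W') t = plugW W (plugW W' t)"
  by (induction W) auto

fun wctx_of_args :: "trm list \<Rightarrow> wctx" where
  "wctx_of_args [] = WHole"
| "wctx_of_args (u # us) = compW (wctx_of_args us) (WESBody WHole u)"

lemma plugW_wctx_of_args [simp]: "plugW (wctx_of_args S) t = plugS S t"
  by (induction S arbitrary: t) auto

text \<open>r extends the environment s by values of the arguments of the explicit substitutions that W
places above its hole, innermost first; these arguments are required to be answers.\<close>
fun wctx_env :: "lterm list \<Rightarrow> wctx \<Rightarrow> lterm list \<Rightarrow> bool" where
  "wctx_env s WHole r \<longleftrightarrow> r = s"
| "wctx_env s (WAppL W u) r \<longleftrightarrow> wctx_env s W r"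
| "wctx_env s (WAppR u W) r \<longleftrightarrow> wctx_env s W r"
| "wctx_env s (WESArg u W) r \<longleftrightarrow> wctx_env s W r"
| "wctx_env s (WESBody W a) r \<longleftrightarrow> answer a \<and> (\<exists>w. eval_env s a w \<and> wctx_env (w # s) W r)"

lemma wctx_env_compW: "wctx_env s (compW W W') r' \<longleftrightarrow> (\<exists>r. wctx_env s W r \<and> wctx_env r W' r')"
  by (induction W arbitrary: s) auto

lemma wctx_env_extends: "wctx_env s W r \<Longrightarrow> \<exists>r'. r = r' @ s \<and> length r' = depthW W"
proof (induction W arbitrary: s)
  case (WESBody W a)
  then obtain w where "wctx_env (w # s) W r" by auto
  then obtain r' where "r = r' @ w # s" "length r' = depthW W" using WESBody.IH by blast
  then show ?case by (intro exI[of _ "r' @ [w]"]) auto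
qed auto

lemma wctx_env_LLam: "wctx_env s W r \<Longrightarrow> \<forall>x\<in>set s. \<exists>b. x = LLam b \<Longrightarrow> \<forall>x\<in>set r. \<exists>b. x = LLam b"
proof (induction W arbitrary: s)
  case (WESBody W a)
  then obtain w where "eval_env s a w" "wctx_env (w # s) W r" by auto
  then show ?case using WESBody eval_env_imp_LLam by (metis set_ConsD)
qed auto

lemma wctx_env_wctx_of_args:
  "eval_args s S ws \<Longrightarrow> \<forall>u\<in>set S. answer u \<Longrightarrow> wctx_env s (wctx_of_args S) (ws @ s)"
  by (induction S arbitrary: ws) (auto simp: wctx_env_compW)

lemma wctx_env_Var_wstep:
  "wctx_env s W r \<Longrightarrow> i < depthW W \<Longrightarrow>
    \<exists>a. answer a \<and> wstep (plugW W (Var i)) (plugW W a) \<and> eval_env r a (r ! i)"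
proof (induction W arbitrary: s)
  case (WESBody W a)
  from WESBody.prems obtain w where a: "answer a" and w: "eval_env s a w"
    and env: "wctx_env (w # s) W r"
    by auto
  show ?case
  proof (cases "i = depthW W")
    case True
    obtain r' where r: "r = r' @ w # s" "length r' = depthW W"
      using wctx_env_extends[OF env] by blast
    let ?a = "shift (Suc (depthW W)) 0 a"
    have "wstep (plugW (WESBody W a) (Var i)) (plugW (WESBody W a) ?a)"
      using True by (auto intro: wstep.e root_e.intros)
    moreover have "answer ?a" using a by (rule answer_shift)
    moreover have "eval_env r ?a w"
      using w eval_env_shift[of "r' @ [w]" "Suc (depthW W)" s a] r by simp
    moreover have "r ! i = w" using r True by (simp add: nth_append)
    ultimately show ?thesis by auto
  next
    case False
    then have "i < depthW W" using WESBody.prems by simp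
    then show ?thesis using WESBody.IH[OF env] by (auto intro: wstep.esBody)
  qed
qed (auto intro: wstep.intros)

definition reaches_answer :: "wctx \<Rightarrow> lterm list \<Rightarrow> trm \<Rightarrow> lterm \<Rightarrow> bool" where
  "reaches_answer W r p v \<longleftrightarrow>
    (\<exists>a. wstep\<^sup>*\<^sup>* (plugW W p) (plugW W a) \<and> answer a \<and> eval_env r a v)"

lemma reaches_answer_Var:
  assumes "wctx_env [] W r" and "i < length r"
  shows "reaches_answer W r (Var i) (r ! i)"
proof -
  have "i < depthW W" using wctx_env_extends[OF assms(1)] assms(2) by auto
  then show ?thesis
    using wctx_env_Var_wstep[OF assms(1)] unfolding reaches_answer_def by blast
qed

lemma reaches_answer_Lam: "reaches_answer W r (Lam b) (LLam (lsubst_list r (Suc 0) (lterm_of b)))"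
  unfolding reaches_answer_def by (auto simp: eval_env_Lam intro: answer.intros)

lemma reaches_answer_App:
  assumes env: "wctx_env [] W r"
    and fun_reaches: "\<And>W'. wctx_env [] W' r \<Longrightarrow> reaches_answer W' r q1 (LLam c)"
    and arg_reaches: "\<And>W'. wctx_env [] W' r \<Longrightarrow> reaches_answer W' r q2 w"
    and body_reaches: "\<And>p r' W'. lsubst c 0 w = lsubst_list r' 0 (lterm_of p) \<Longrightarrow>
      wctx_env [] W' r' \<Longrightarrow> reaches_answer W' r' p v"
  shows "reaches_answer W r (App q1 q2) v"
proof -
  obtain a1 where steps1: "wstep\<^sup>*\<^sup>* (plugW W (App q1 q2)) (plugW W (App a1 q2))"
    and a1: "answer a1" and e1: "eval_env r a1 (LLam c)"
    using fun_reaches[of "compW W (WAppL WHole q2)"] env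
    by (auto simp: reaches_answer_def wctx_env_compW)
  obtain a2 where steps2: "wstep\<^sup>*\<^sup>* (plugW W (App a1 q2)) (plugW W (App a1 a2))"
    and a2: "answer a2" and e2: "eval_env r a2 w"
    using arg_reaches[of "compW W (WAppR a1 WHole)"] env
    by (auto simp: reaches_answer_def wctx_env_compW)
  obtain S b where a1_eq: "a1 = plugS S (Lam b)" and S: "\<forall>u\<in>set S. answer u"
    using answer_imp_plugS_Lam[OF a1] by blast
  obtain ws where ws: "eval_args r S ws" and c: "c = lsubst_list (ws @ r) (Suc 0) (lterm_of b)"
    using e1 unfolding a1_eq eval_env_plugS by (auto simp: eval_env_Lam)
  let ?a2 = "shift (length S) 0 a2"
  have step3: "wstep (plugW W (App a1 a2)) (plugW W (plugS S (ES b ?a2)))"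
    unfolding a1_eq by (rule wstep_plugW) (auto intro: wstep.m root_m.intros)
  have e2': "eval_env (ws @ r) ?a2 w"
    using e2 eval_env_shift[OF eval_args_length[OF ws]] by simp
  have "lsubst c 0 w = lsubst_list (w # ws @ r) 0 (lterm_of b)"
    unfolding c by (rule lsubst_lsubst_list)
  moreover have "wctx_env [] (compW W (compW (wctx_of_args S) (WESBody WHole ?a2))) (w # ws @ r)"
    using env wctx_env_wctx_of_args[OF ws S] e2' answer_shift[OF a2] by (auto simp: wctx_env_compW)
  ultimately obtain a3 where
    steps4: "wstep\<^sup>*\<^sup>* (plugW W (plugS S (ES b ?a2))) (plugW W (plugS S (ES a3 ?a2)))"
    and a3: "answer a3" and e3: "eval_env (w # ws @ r) a3 v"
    using body_reaches by (fastforce simp: reaches_answer_def)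
  have "wstep\<^sup>*\<^sup>* (plugW W (App q1 q2)) (plugW W (plugS (?a2 # S) a3))"
    using steps1 steps2 step3 steps4 by (auto intro: rtranclp_trans)
  moreover have "answer (plugS (?a2 # S) a3)"
    using a3 S answer_shift[OF a2] by (auto simp: answer_plugS_iff)
  moreover have "eval_env r (plugS (?a2 # S) a3) v"
    unfolding eval_env_plugS using ws e2' e3 by (intro exI[of _ "w # ws"]) auto
  ultimately show ?thesis unfolding reaches_answer_def by blast
qed

lemma reaches_answer_ES:
  assumes env: "wctx_env [] W r"
    and arg_reaches: "\<And>W'. wctx_env [] W' r \<Longrightarrow> reaches_answer W' r q2 w"
    and body_reaches: "\<And>W'. wctx_env [] W' (w # r) \<Longrightarrow> reaches_answer W' (w # r) q1 v"
  shows "reaches_answer W r (ES q1 q2) v"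
proof -
  obtain a2 where steps2: "wstep\<^sup>*\<^sup>* (plugW W (ES q1 q2)) (plugW W (ES q1 a2))"
    and a2: "answer a2" and e2: "eval_env r a2 w"
    using arg_reaches[of "compW W (WESArg q1 WHole)"] env
    by (auto simp: reaches_answer_def wctx_env_compW)
  obtain a1 where steps1: "wstep\<^sup>*\<^sup>* (plugW W (ES q1 a2)) (plugW W (ES a1 a2))"
    and a1: "answer a1" and e1: "eval_env (w # r) a1 v"
    using body_reaches[of "compW W (WESBody WHole a2)"] env e2 a2
    by (auto simp: reaches_answer_def wctx_env_compW)
  have "wstep\<^sup>*\<^sup>* (plugW W (ES q1 q2)) (plugW W (ES a1 a2))"
    using steps2 steps1 by (rule rtranclp_trans)
  moreover have "eval_env r (ES a1 a2) v" unfolding eval_env_ES using e2 e1 by blast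
  ultimately show ?thesis using a1 a2 unfolding reaches_answer_def by auto
qed

lemma cbv_eval_imp_reaches_answer:
  "cbv_eval t v \<Longrightarrow> t = lsubst_list r 0 (lterm_of p) \<Longrightarrow> wctx_env [] W r \<Longrightarrow>
    reaches_answer W r p v"
proof (induction arbitrary: p r W rule: cbv_eval.induct)
  case (cbv_eval_LLam c)
  show ?case
  proof (cases p)
    case (Var i)
    then have "i < length r" "r ! i = LLam c"
      using cbv_eval_LLam.prems(1) by (auto split: if_splits)
    then show ?thesis using Var reaches_answer_Var[OF cbv_eval_LLam.prems(2)] by metis
  next
    case (Lam b)
    then show ?thesis using cbv_eval_LLam.prems(1) reaches_answer_Lam by simp
  qed (use cbv_eval_LLam.prems(1) in auto)
next
  case (cbv_eval_LApp p0 c q0 w v)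
  note env = cbv_eval_LApp.prems(2)
  show ?case
  proof (cases p)
    case (Var i)
    have "\<forall>x\<in>set r. \<exists>b. x = LLam b" using wctx_env_LLam[OF env] by simp
    then show ?thesis using cbv_eval_LApp.prems(1) Var by (auto split: if_splits dest!: nth_mem)
  next
    case (App q1 q2)
    then have "p0 = lsubst_list r 0 (lterm_of q1)" "q0 = lsubst_list r 0 (lterm_of q2)"
      using cbv_eval_LApp.prems(1) by simp_all
    then show ?thesis
      unfolding App using cbv_eval_LApp.IH by (intro reaches_answer_App[OF env])
  next
    case (ES q1 q2)
    then have "p0 = LLam (lsubst_list r (Suc 0) (lterm_of q1))" "q0 = lsubst_list r 0 (lterm_of q2)"
      using cbv_eval_LApp.prems(1) by simp_all
    moreover have "lsubst c 0 w = lsubst_list (w # r) 0 (lterm_of q1)"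
      using calculation(1) cbv_eval_LApp.hyps(1) lsubst_lsubst_list[of r 0 "lterm_of q1" w] by simp
    ultimately show ?thesis
      unfolding ES using cbv_eval_LApp.IH(2,3) by (intro reaches_answer_ES[OF env])
  qed (use cbv_eval_LApp.prems(1) in auto)
qed

lemma cbv_eval_imp_wnorm: "cbv_eval (lterm_of s) v \<Longrightarrow> wnorm s"
proof -
  assume "cbv_eval (lterm_of s) v"
  then obtain a where "wstep\<^sup>*\<^sup>* s a" and "answer a"
    using cbv_eval_imp_reaches_answer[of _ v "[]" s WHole] by (auto simp: reaches_answer_def)
  moreover have "wnorm a" using answer_wnorm[OF \<open>answer a\<close>] .
  ultimately show ?thesis unfolding wnorm_def by (blast intro: rtranclp_trans)
qed

lemma closed_iff_lclosed_lterm_of: "closed s \<longleftrightarrow> lclosed (lterm_of s)"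
  by (simp add: closed_def lclosed_def)

theorem closed_imp_wnorm_iff_bvnorm: "closed s \<Longrightarrow> wnorm s \<longleftrightarrow> bvnorm (lterm_of s)"
  using closed_wnorm_imp_cbv_eval cbv_eval_imp_wnorm bvnorm_iff_cbv_eval closed_iff_lclosed_lterm_of
  by blast

fun lctx_of :: "ctx \<Rightarrow> lctx" where
  "lctx_of CHole = LHole"
| "lctx_of (CLam C) = LCLam (lctx_of C)"
| "lctx_of (CAppL C u) = LCAppL (lctx_of C) (lterm_of u)"
| "lctx_of (CAppR u C) = LCAppR (lterm_of u) (lctx_of C)"
| "lctx_of (CESBody C u) = LCAppL (LCLam (lctx_of C)) (lterm_of u)"
| "lctx_of (CESArg u C) = LCAppR (LLam (lterm_of u)) (lctx_of C)"

lemma lterm_of_plug: "lterm_of (plug C s) = lplug (lctx_of C) (lterm_of s)"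
  by (induction C) auto

fun ctx_emb :: "lctx \<Rightarrow> ctx" where
  "ctx_emb LHole = CHole"
| "ctx_emb (LCLam C) = CLam (ctx_emb C)"
| "ctx_emb (LCAppL C u) = CAppL (ctx_emb C) (emb u)"
| "ctx_emb (LCAppR u C) = CAppR (emb u) (ctx_emb C)"

lemma plug_ctx_emb: "plug (ctx_emb C) (emb t) = emb (lplug C t)"
  by (induction C) auto

theorem theorem7p6:
  fixes t u :: lterm
  shows "equiv_S (emb t) (emb u) \<longleftrightarrow> equiv_V t u"
proof
  assume S: "equiv_S (emb t) (emb u)"
  show "equiv_V t u" unfolding equiv_V_def
  proof (intro allI impI)
    fix C
    assume "lclosed (lplug C t) \<and> lclosed (lplug C u)"
    then show "bvnorm (lplug C t) \<longleftrightarrow> bvnorm (lplug C u)"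
      using S[unfolded equiv_S_def, rule_format, of "ctx_emb C"] closed_imp_wnorm_iff_bvnorm
      by (simp add: plug_ctx_emb closed_iff_lclosed_lterm_of)
  qed
next
  assume V: "equiv_V t u"
  show "equiv_S (emb t) (emb u)" unfolding equiv_S_def
  proof (intro allI impI)
    fix C
    assume "closed (plug C (emb t)) \<and> closed (plug C (emb u))"
    then show "wnorm (plug C (emb t)) \<longleftrightarrow> wnorm (plug C (emb u))"
      using V[unfolded equiv_V_def, rule_format, of "lctx_of C"] closed_imp_wnorm_iff_bvnorm
      by (simp add: lterm_of_plug closed_iff_lclosed_lterm_of)
  qed
qed

end
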